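(* Let $d\ge4$ be divisible by $4$, let $V=I$ (the $d\times d$ identity), let $h(x)=\|x\|$ (Euclidean norm) for $x\in\mathbb R^d$, and let $m=E(\|X\|)$ with $X\sim N(0,I)$. Let $i_0,i_1,\dots$ be i.i.d. uniform on $\{1,\dots,d\}$ and let $X_n$ be defined by the recursion below. Then for $n=d/4$, $$E\Big(\Big(\frac{\sum_{j=0}^{n-1}h(X_j)}{n}-m\Big)^2\Big)\ge\frac{d}{25}.$$
   Context: Let $e_i$ be the $i$-th standard basis column vector of $\mathbb R^d$. Let $(g_n)_{n\ge0}$ be i.i.d. standard Gaussian random variables independent of $(i_n)$. Define $X_0=0$ and $X_{n+1}=X_n+(g_n-e_{i_n}^TX_n)\,Ve_{i_n}$ for $n\ge0$. *)

theory Defs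
  imports "HOL-Probability.Probability"
begin

definition std_gauss :: "real measure" where
  "std_gauss = density lborel std_normal_density"

definition std_gauss_vec_density :: "real ^ 'n \<Rightarrow> real" where
  "std_gauss_vec_density x =
     (2 * pi) powr (- real CARD('n) / 2) * exp (- (norm x)\<^sup>2 / 2)"

primrec walk :: "real ^ 'n ^ 'n \<Rightarrow> (nat \<Rightarrow> 'a \<Rightarrow> 'n) \<Rightarrow> (nat \<Rightarrow> 'a \<Rightarrow> real)
                 \<Rightarrow> nat \<Rightarrow> 'a \<Rightarrow> real ^ 'n" where
  "walk V i g 0 \<omega> = 0"
| "walk V i g (Suc k) \<omega> =
     walk V i g k \<omega> + (g k \<omega> - walk V i g k \<omega> $ i k \<omega>) *\<^sub>R (V *v axis (i k \<omega>) 1)"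

end

theory Submission
  imports Defs
begin

text \<open>
  Replacing one coordinate by a fresh Gaussian increases the squared norm by at most the square of
  that Gaussian, so \<open>\<parallel>X\<^sub>j\<parallel>\<^sup>2 \<le> \<Sum>\<^sub>l\<^sub><\<^sub>j g\<^sub>l\<^sup>2\<close>, and the ergodic average \<open>A\<close> of the first \<open>n = d/4\<close>
  norms is at most \<open>\<surd>S\<close> with \<open>S = \<Sum>\<^sub>l\<^sub><\<^sub>n g\<^sub>l\<^sup>2\<close>, \<open>E S = n\<close>. On the other hand
  \<open>m \<ge> \<surd>(2d/\<pi>) \<ge> 0.7\<surd>d\<close> since \<open>\<parallel>x\<parallel> \<ge> \<parallel>x\<parallel>\<^sub>1/\<surd>d\<close>. Bounding \<open>(A - m)\<^sup>2\<close> from below by a tangent line in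
  \<open>A\<close> and \<open>\<surd>S\<close> from above by a tangent line in \<open>S\<close> makes everything linear in \<open>S\<close>, and taking
  expectations gives \<open>E (A - m)\<^sup>2 \<ge> 2c(m - \<surd>n) - c\<^sup>2 \<ge> d/25\<close> for \<open>c = \<surd>d/5\<close>.
  Only the laws of the pairs \<open>(i\<^sub>k, g\<^sub>k)\<close> are used, not their independence.
\<close>

lemma std_gauss_vec_density_eq_prod:
  "std_gauss_vec_density (x :: real ^ 'n) = (\<Prod>b\<in>Basis. std_normal_density (x \<bullet> b))"
proof -
  have "(norm x)\<^sup>2 = (\<Sum>b\<in>Basis. (x \<bullet> b)\<^sup>2)"
    unfolding power2_norm_eq_inner by (subst euclidean_inner) (simp add: power2_eq_square)
  then have "exp (- (norm x)\<^sup>2 / 2) = (\<Prod>b\<in>Basis. exp (- (x \<bullet> b)\<^sup>2 / 2))"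
    by (simp add: exp_sum[symmetric] sum_negf sum_divide_distrib)
  moreover have "(2 * pi) powr (- real CARD('n) / 2) = (1 / sqrt (2 * pi)) ^ CARD('n)"
  proof -
    have "(2 * pi) powr (- real CARD('n) / 2) = (sqrt (2 * pi)) powr (- real CARD('n))"
      by (simp add: powr_powr powr_half_sqrt[symmetric])
    then show ?thesis
      by (simp add: powr_minus powr_realpow power_one_over inverse_eq_divide)
  qed
  moreover have "(\<Prod>b\<in>(Basis :: (real ^ 'n) set). 1 / sqrt (2 * pi) * exp (- (x \<bullet> b)\<^sup>2 / 2))
      = (1 / sqrt (2 * pi)) ^ CARD('n) * (\<Prod>b\<in>Basis. exp (- (x \<bullet> b)\<^sup>2 / 2))"
    by (simp only: prod.distrib prod_constant) simp
  ultimately show ?thesis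
    unfolding std_gauss_vec_density_def std_normal_density_def by simp
qed

lemma nn_integral_abs_inner_std_gauss:
  fixes u :: "'a::euclidean_space"
  assumes u: "u \<in> Basis"
  shows "(\<integral>\<^sup>+x. ennreal (\<bar>x \<bullet> u\<bar> * (\<Prod>b\<in>Basis. std_normal_density (x \<bullet> b))) \<partial>lborel)
           = ennreal (sqrt (2 / pi))"
proof -
  let ?f = "\<lambda>b t. if b = u then \<bar>t\<bar> * std_normal_density t else std_normal_density t"
  have factor: "ennreal (\<bar>x \<bullet> u\<bar> * (\<Prod>b\<in>Basis. std_normal_density (x \<bullet> b)))
                  = (\<Prod>b\<in>Basis. ennreal (?f b (x \<bullet> b)))" for x :: 'a
  proof -
    have "(\<Prod>b\<in>Basis. ?f b (x \<bullet> b))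
            = (\<Prod>b\<in>Basis. (if b = u then \<bar>x \<bullet> b\<bar> else 1) * std_normal_density (x \<bullet> b))"
      by (intro prod.cong) auto
    also have "\<dots> = \<bar>x \<bullet> u\<bar> * (\<Prod>b\<in>Basis. std_normal_density (x \<bullet> b))"
      using u by (simp add: prod.distrib prod.delta)
    finally show ?thesis
      by (subst prod_ennreal) (auto simp: normal_density_nonneg)
  qed
  have density: "(\<integral>\<^sup>+t. ennreal (std_normal_density t) \<partial>lborel) = 1"
    using std_normal_moment_even[of 0]
    by (subst nn_integral_eq_integral) (auto simp: has_bochner_integral_iff)
  have abs_moment: "(\<integral>\<^sup>+t. ennreal (\<bar>t\<bar> * std_normal_density t) \<partial>lborel) = ennreal (sqrt (2 / pi))"
    using std_normal_moment_abs_odd[of 0]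
    by (subst nn_integral_eq_integral) (auto simp: has_bochner_integral_iff mult.commute)
  have "(\<integral>\<^sup>+x. (\<Prod>b\<in>Basis. ennreal (?f b (x \<bullet> b))) \<partial>lborel)
          = (\<Prod>b\<in>Basis. (\<integral>\<^sup>+t. ennreal (?f b t) \<partial>lborel))"
    by (rule nn_integral_lborel_prod) auto
  also have "\<dots> = (\<Prod>b\<in>Basis. if b = u then ennreal (sqrt (2 / pi)) else 1)"
    using density abs_moment by (intro prod.cong) auto
  also have "\<dots> = ennreal (sqrt (2 / pi))"
    using u by (simp add: prod.delta)
  finally show ?thesis
    by (simp add: factor)
qed

lemma
  fixes u :: "'a::euclidean_space"
  assumes "u \<in> Basis"
  shows integrable_abs_inner_std_gauss:
      "integrable lborel (\<lambda>x. \<bar>x \<bullet> u\<bar> * (\<Prod>b\<in>Basis. std_normal_density (x \<bullet> b)))"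
    and integral_abs_inner_std_gauss:
      "(\<integral>x. \<bar>x \<bullet> u\<bar> * (\<Prod>b\<in>Basis. std_normal_density (x \<bullet> b)) \<partial>lborel) = sqrt (2 / pi)"
proof -
  have nonneg: "0 \<le> \<bar>x \<bullet> u\<bar> * (\<Prod>b\<in>Basis. std_normal_density (x \<bullet> b))" for x :: 'a
    by (auto intro!: mult_nonneg_nonneg prod_nonneg normal_density_nonneg)
  show "integrable lborel (\<lambda>x. \<bar>x \<bullet> u\<bar> * (\<Prod>b\<in>Basis. std_normal_density (x \<bullet> b)))"
    by (rule integrableI_nn_integral_finite[OF _ _ nn_integral_abs_inner_std_gauss[OF assms]])
      (auto simp: nonneg)
  show "(\<integral>x. \<bar>x \<bullet> u\<bar> * (\<Prod>b\<in>Basis. std_normal_density (x \<bullet> b)) \<partial>lborel) = sqrt (2 / pi)"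
    by (subst integral_eq_nn_integral) (auto simp: nonneg nn_integral_abs_inner_std_gauss[OF assms])
qed

lemma sum_abs_inner_Basis_le:
  fixes x :: "'a::euclidean_space"
  shows "(\<Sum>b\<in>Basis. \<bar>x \<bullet> b\<bar>) \<le> sqrt DIM('a) * norm x"
proof (rule power2_le_imp_le)
  have "(\<Sum>b\<in>Basis. \<bar>x \<bullet> b\<bar>)\<^sup>2 \<le> (\<Sum>b\<in>Basis. \<bar>x \<bullet> b\<bar>\<^sup>2) * DIM('a)"
    by (rule sum_squared_le_sum_of_squares)
  also have "\<dots> = (sqrt DIM('a) * norm x)\<^sup>2"
    unfolding power2_norm_eq_inner power_mult_distrib
    by (subst euclidean_inner[of x x]) (simp add: power2_eq_square)
  finally show "(\<Sum>b\<in>Basis. \<bar>x \<bullet> b\<bar>)\<^sup>2 \<le> (sqrt DIM('a) * norm x)\<^sup>2" .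
qed simp

lemma integral_norm_std_gauss_vec_ge:
  "sqrt (2 / pi) * sqrt CARD('n)
     \<le> (\<integral>x. norm x * std_gauss_vec_density x \<partial>(lborel :: (real ^ 'n) measure))"
proof -
  let ?D = "\<lambda>x :: real ^ 'n. \<Prod>b\<in>Basis. std_normal_density (x \<bullet> b)"
  let ?L = "\<lambda>x :: real ^ 'n. \<Sum>b\<in>Basis. \<bar>x \<bullet> b\<bar> * ?D x"
  have D_nonneg: "0 \<le> ?D x" for x
    by (auto intro!: prod_nonneg normal_density_nonneg)
  have L_integrable: "integrable lborel ?L"
    by (intro Bochner_Integration.integrable_sum integrable_abs_inner_std_gauss)
  have norm_integrable: "integrable lborel (\<lambda>x :: real ^ 'n. norm x * std_gauss_vec_density x)"
  proof (rule Bochner_Integration.integrable_bound[OF L_integrable _ AE_I2])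
    show "(\<lambda>x. norm x * std_gauss_vec_density x) \<in> borel_measurable lborel"
      unfolding std_gauss_vec_density_def by measurable
    have "norm x * ?D x \<le> ?L x" for x :: "real ^ 'n"
      unfolding sum_distrib_right[symmetric] by (intro mult_right_mono norm_le_l1 D_nonneg)
    then show "norm (norm x * std_gauss_vec_density x) \<le> norm (?L x)" for x :: "real ^ 'n"
      using D_nonneg[of x] abs_ge_self[of "?L x"] order_trans
      by (simp add: std_gauss_vec_density_eq_prod) blast
  qed
  have "sqrt (2 / pi) * sqrt CARD('n) = (\<integral>x. ?L x / sqrt CARD('n) \<partial>lborel)"
    by (simp add: Bochner_Integration.integral_sum[OF integrable_abs_inner_std_gauss]
        integral_abs_inner_std_gauss real_div_sqrt mult.commute[of "real CARD('n)"]
        times_divide_eq_right[symmetric])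
  also have "\<dots> \<le> (\<integral>x. norm x * std_gauss_vec_density x \<partial>(lborel :: (real ^ 'n) measure))"
  proof (rule Bochner_Integration.integral_mono[OF _ norm_integrable])
    show "integrable lborel (\<lambda>x. ?L x / sqrt CARD('n))"
      using L_integrable by simp
    have "(\<Sum>b\<in>Basis. \<bar>x \<bullet> b\<bar>) * ?D x \<le> (sqrt CARD('n) * norm x) * ?D x" for x :: "real ^ 'n"
      using sum_abs_inner_Basis_le[of x] by (intro mult_right_mono D_nonneg) simp
    then show "?L x / sqrt CARD('n) \<le> norm x * std_gauss_vec_density x" for x :: "real ^ 'n"
      by (simp add: std_gauss_vec_density_eq_prod sum_distrib_right[symmetric] field_simps)
  qed
  finally show ?thesis .
qed

lemma walk_identity_Suc:
  "walk (mat 1) i g (Suc k) \<omega> = (\<chi> c. if c = i k \<omega> then g k \<omega> else walk (mat 1) i g k \<omega> $ c)"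
  by (auto simp: vec_eq_iff axis_def)

lemma norm_walk_identity_sq_le: "(norm (walk (mat 1) i g j \<omega>))\<^sup>2 \<le> (\<Sum>l<j. (g l \<omega>)\<^sup>2)"
proof (induction j)
  case 0
  then show ?case by simp
next
  case (Suc k)
  let ?X = "walk (mat 1) i g k \<omega>"
  have norm_sq: "(norm v)\<^sup>2 = (\<Sum>c\<in>UNIV. (v $ c)\<^sup>2)" for v :: "real ^ 'n"
    unfolding power2_norm_eq_inner inner_vec_def by (simp add: power2_eq_square)
  have "(norm (walk (mat 1) i g (Suc k) \<omega>))\<^sup>2
          = (\<Sum>c\<in>UNIV. if c = i k \<omega> then (g k \<omega>)\<^sup>2 else (?X $ c)\<^sup>2)"
    unfolding walk_identity_Suc norm_sq by (intro sum.cong) auto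
  also have "\<dots> \<le> (\<Sum>c\<in>UNIV. (?X $ c)\<^sup>2 + (if c = i k \<omega> then (g k \<omega>)\<^sup>2 else 0))"
    by (intro sum_mono) auto
  also have "\<dots> = (norm ?X)\<^sup>2 + (g k \<omega>)\<^sup>2"
    by (simp add: sum.distrib norm_sq)
  also have "\<dots> \<le> (\<Sum>l<Suc k. (g l \<omega>)\<^sup>2)"
    using Suc by simp
  finally show ?case .
qed

lemma mean_norm_walk_identity_le:
  "(\<Sum>j<n. norm (walk (mat 1) i g j \<omega>)) / real n \<le> sqrt (\<Sum>l<n. (g l \<omega>)\<^sup>2)"
proof (cases "n = 0")
  case False
  have "norm (walk (mat 1) i g j \<omega>) \<le> sqrt (\<Sum>l<n. (g l \<omega>)\<^sup>2)" if "j < n" for j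
  proof (rule real_le_rsqrt)
    have "(norm (walk (mat 1) i g j \<omega>))\<^sup>2 \<le> (\<Sum>l<j. (g l \<omega>)\<^sup>2)"
      by (rule norm_walk_identity_sq_le)
    also have "\<dots> \<le> (\<Sum>l<n. (g l \<omega>)\<^sup>2)"
      using that by (intro sum_mono2) auto
    finally show "(norm (walk (mat 1) i g j \<omega>))\<^sup>2 \<le> (\<Sum>l<n. (g l \<omega>)\<^sup>2)" .
  qed
  then have "(\<Sum>j<n. norm (walk (mat 1) i g j \<omega>)) \<le> (\<Sum>j<n. sqrt (\<Sum>l<n. (g l \<omega>)\<^sup>2))"
    by (intro sum_mono) simp
  then show ?thesis
    using False by (simp add: divide_le_eq mult.commute)
qed simp

lemma measurable_walk:
  assumes "\<And>k. i k \<in> measurable M (count_space UNIV)"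
    and "\<And>k. g k \<in> borel_measurable M"
  shows "(\<lambda>\<omega>. walk V i g j \<omega>) \<in> borel_measurable M"
proof (induction j)
  case 0
  then show ?case by simp
next
  case (Suc k)
  let ?step = "\<lambda>c \<omega>. walk V i g k \<omega> + (g k \<omega> - walk V i g k \<omega> $ c) *\<^sub>R (V *v axis c 1)"
  have "(\<lambda>\<omega>. ?step (i k \<omega>) \<omega>) \<in> borel_measurable M"
  proof (rule measurable_compose_countable'[OF _ assms(1)])
    show "?step c \<in> borel_measurable M" for c
      unfolding cart_eq_inner_axis using Suc assms(2) by measurable
  qed simp
  then show ?case by simp
qed

lemma distr_snd_pair_measure:
  assumes "prob_space N" and "sigma_finite_measure G"
  shows "distr (N \<Otimes>\<^sub>M G) G snd = G"
proof (rule measure_eqI)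
  interpret N: prob_space N by fact
  interpret G: sigma_finite_measure G by fact
  fix A assume "A \<in> sets (distr (N \<Otimes>\<^sub>M G) G snd)"
  then have A: "A \<in> sets G" by simp
  then have "emeasure (distr (N \<Otimes>\<^sub>M G) G snd) A = emeasure (N \<Otimes>\<^sub>M G) (space N \<times> A)"
    by (auto simp: emeasure_distr space_pair_measure dest: sets.sets_into_space
        intro!: arg_cong2[where f = emeasure])
  with A show "emeasure (distr (N \<Otimes>\<^sub>M G) G snd) A = emeasure G A"
    by (simp add: G.emeasure_pair_measure_Times N.emeasure_space_1)
qed simp

lemma distr_snd_of_joint_distr:
  assumes "(\<lambda>\<omega>. (X \<omega>, Y \<omega>)) \<in> measurable M (N \<Otimes>\<^sub>M G)"
    and "distr M (N \<Otimes>\<^sub>M G) (\<lambda>\<omega>. (X \<omega>, Y \<omega>)) = N \<Otimes>\<^sub>M G"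
    and "prob_space N" and "sigma_finite_measure G"
  shows "distr M G Y = G"
proof -
  have "distr M G Y = distr (distr M (N \<Otimes>\<^sub>M G) (\<lambda>\<omega>. (X \<omega>, Y \<omega>))) G snd"
    using assms(1) by (subst distr_distr) (auto simp: comp_def)
  then show ?thesis
    using assms(2-4) by (simp add: distr_snd_pair_measure)
qed

lemma prob_space_std_gauss: "prob_space std_gauss"
  unfolding std_gauss_def by (rule prob_space_normal_density) simp

lemma
  shows integrable_sq_std_gauss: "integrable std_gauss (\<lambda>x. x\<^sup>2)"
    and integral_sq_std_gauss: "(\<integral>x. x\<^sup>2 \<partial>std_gauss) = 1"
proof -
  have "has_bochner_integral lborel (\<lambda>x. std_normal_density x * x\<^sup>2) 1"
    using std_normal_moment_even[of 1] by simp
  then show "integrable std_gauss (\<lambda>x. x\<^sup>2)" "(\<integral>x. x\<^sup>2 \<partial>std_gauss) = 1"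
    unfolding std_gauss_def has_bochner_integral_iff
    by (simp_all add: integrable_density integral_density normal_density_nonneg)
qed

lemma (in prob_space)
  assumes XY: "(\<lambda>\<omega>. (X \<omega>, Y \<omega>)) \<in> M \<rightarrow>\<^sub>M measure_pmf p \<Otimes>\<^sub>M std_gauss"
    and law: "distr M (measure_pmf p \<Otimes>\<^sub>M std_gauss) (\<lambda>\<omega>. (X \<omega>, Y \<omega>)) = measure_pmf p \<Otimes>\<^sub>M std_gauss"
  shows measurable_fst_pmf_std_gauss_pair: "X \<in> measurable M (count_space UNIV)"
    and measurable_snd_pmf_std_gauss_pair: "Y \<in> borel_measurable M"
    and integrable_sq_snd_pmf_std_gauss_pair: "integrable M (\<lambda>\<omega>. (Y \<omega>)\<^sup>2)"
    and expectation_sq_snd_pmf_std_gauss_pair: "expectation (\<lambda>\<omega>. (Y \<omega>)\<^sup>2) = 1"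
proof -
  interpret std_gauss: prob_space std_gauss
    by (rule prob_space_std_gauss)
  show "X \<in> measurable M (count_space UNIV)"
    using measurable_compose[OF XY measurable_fst] by simp
  have Y: "Y \<in> measurable M std_gauss"
    using measurable_compose[OF XY measurable_snd] by simp
  then show "Y \<in> borel_measurable M"
    by (simp add: std_gauss_def)
  have distr_Y: "distr M std_gauss Y = std_gauss"
    by (rule distr_snd_of_joint_distr[OF XY law])
      (simp_all add: prob_space_measure_pmf std_gauss.sigma_finite_measure)
  have sq_measurable: "(\<lambda>x. x\<^sup>2) \<in> borel_measurable std_gauss"
    by (simp add: std_gauss_def)
  show "integrable M (\<lambda>\<omega>. (Y \<omega>)\<^sup>2)"
    using integrable_distr_eq[OF Y sq_measurable] distr_Y integrable_sq_std_gauss by simp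
  show "expectation (\<lambda>\<omega>. (Y \<omega>)\<^sup>2) = 1"
    using integral_distr[OF Y sq_measurable] distr_Y integral_sq_std_gauss by simp
qed

lemma sqrt_le_tangent:
  assumes "0 \<le> S" and "0 < s"
  shows "sqrt S \<le> (s + S / s) / 2"
proof -
  have "2 * s * sqrt S \<le> s\<^sup>2 + (sqrt S)\<^sup>2"
    by (rule sum_squares_bound)
  then have "2 * s * sqrt S \<le> S + s\<^sup>2"
    using real_sqrt_pow2[OF assms(1)] by linarith
  then show ?thesis
    using assms(2) by (simp add: field_simps power2_eq_square)
qed

lemma (in prob_space) expectation_sq_diff_ge_tangent:
  assumes A_measurable: "A \<in> borel_measurable M" and S_integrable: "integrable M S"
    and A_nonneg: "\<And>\<omega>. 0 \<le> A \<omega>" and A_le: "\<And>\<omega>. A \<omega> \<le> sqrt (S \<omega>)"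
    and "0 < s" and "0 \<le> c"
  shows "2 * c * (m - (s + expectation S / s) / 2) - c\<^sup>2 \<le> expectation (\<lambda>\<omega>. (A \<omega> - m)\<^sup>2)"
proof -
  have S_nonneg: "0 \<le> S \<omega>" for \<omega>
    using order_trans[OF A_nonneg A_le, of \<omega>] by simp
  have A_sq_le: "(A \<omega>)\<^sup>2 \<le> S \<omega>" for \<omega>
    using power_mono[OF A_le A_nonneg, of \<omega> 2] by (simp add: S_nonneg)
  \<comment> \<open>\<open>(A - m)\<^sup>2 \<ge> 2c(m - A) - c\<^sup>2\<close> is the tangent line of the parabola at \<open>A = m - c\<close>.\<close>
  have tangent: "2 * c * (m - (s + S \<omega> / s) / 2) - c\<^sup>2 \<le> (A \<omega> - m)\<^sup>2" for \<omega>
  proof -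
    have "A \<omega> \<le> (s + S \<omega> / s) / 2"
      using A_le[of \<omega>] sqrt_le_tangent[OF S_nonneg[of \<omega>] \<open>0 < s\<close>] by linarith
    then have "2 * c * (m - (s + S \<omega> / s) / 2) \<le> 2 * c * (m - A \<omega>)"
      using \<open>0 \<le> c\<close> by (intro mult_left_mono) auto
    moreover have "(A \<omega> - m)\<^sup>2 - (2 * c * (m - A \<omega>) - c\<^sup>2) = (m - A \<omega> - c)\<^sup>2"
      by (simp add: power2_eq_square algebra_simps)
    ultimately show ?thesis
      using zero_le_power2[of "m - A \<omega> - c"] by linarith
  qed
  have sq_diff_integrable: "integrable M (\<lambda>\<omega>. (A \<omega> - m)\<^sup>2)"
  proof (rule Bochner_Integration.integrable_bound[OF _ _ AE_I2])
    show "integrable M (\<lambda>\<omega>. 2 * S \<omega> + 2 * m\<^sup>2)"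
      using S_integrable by simp
    show "(\<lambda>\<omega>. (A \<omega> - m)\<^sup>2) \<in> borel_measurable M"
      using A_measurable by measurable
    have sq_diff_le: "(A \<omega> - m)\<^sup>2 \<le> 2 * (A \<omega>)\<^sup>2 + 2 * m\<^sup>2" for \<omega>
      using zero_le_power2[of "A \<omega> + m"] by (simp add: power2_eq_square algebra_simps)
    show "norm ((A \<omega> - m)\<^sup>2) \<le> norm (2 * S \<omega> + 2 * m\<^sup>2)" for \<omega>
      using sq_diff_le[of \<omega>] A_sq_le[of \<omega>] S_nonneg[of \<omega>] by simp
  qed
  have "expectation (\<lambda>\<omega>. 2 * c * (m - (s + S \<omega> / s) / 2) - c\<^sup>2)
          = 2 * c * (m - (s + expectation S / s) / 2) - c\<^sup>2"
    using S_integrable by (simp add: algebra_simps prob_space)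
  moreover have "expectation (\<lambda>\<omega>. 2 * c * (m - (s + S \<omega> / s) / 2) - c\<^sup>2)
                   \<le> expectation (\<lambda>\<omega>. (A \<omega> - m)\<^sup>2)"
    using S_integrable sq_diff_integrable tangent by (intro integral_mono) auto
  ultimately show ?thesis by simp
qed

lemma sqrt_two_div_pi_ge: "7 / 10 \<le> sqrt (2 / pi)"
proof (rule real_le_rsqrt)
  show "(7 / 10)\<^sup>2 \<le> 2 / pi"
    using pi_less_4 pi_gt_zero by (simp add: field_simps power2_eq_square)
qed

lemma tangent_bound_ge_d_div_25:
  fixes d m :: real
  assumes "0 \<le> d" and "sqrt (2 / pi) * sqrt d \<le> m"
  shows "d / 25 \<le> 2 * (sqrt d / 5) * (m - sqrt d / 2) - (sqrt d / 5)\<^sup>2"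
proof -
  have "7 / 10 * sqrt d \<le> sqrt (2 / pi) * sqrt d"
    by (rule mult_right_mono[OF sqrt_two_div_pi_ge]) (simp add: assms(1))
  then have "7 / 10 * sqrt d \<le> m"
    using assms(2) by linarith
  then have "sqrt d / 5 \<le> m - sqrt d / 2"
    by linarith
  then have "2 * (sqrt d / 5) * (sqrt d / 5) \<le> 2 * (sqrt d / 5) * (m - sqrt d / 2)"
    by (rule mult_left_mono) (simp add: assms(1))
  moreover have "2 * (sqrt d / 5) * (sqrt d / 5) = 2 * (d / 25)"
    using real_sqrt_pow2[OF assms(1)] by (simp add: power2_eq_square)
  moreover have "(sqrt d / 5)\<^sup>2 = d / 25"
    using real_sqrt_pow2[OF assms(1)] by (simp add: power_divide)
  ultimately show ?thesis
    by linarith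
qed

theorem mainTheorem10:
  fixes M :: "'a measure"
    and i :: "nat \<Rightarrow> 'a \<Rightarrow> 'n::finite"
    and g :: "nat \<Rightarrow> 'a \<Rightarrow> real"
  assumes "prob_space M"
    and "4 dvd CARD('n)" and "CARD('n) \<ge> 4"
    and "prob_space.indep_vars M
           (\<lambda>_. measure_pmf (pmf_of_set (UNIV :: 'n set)) \<Otimes>\<^sub>M std_gauss)
           (\<lambda>k \<omega>. (i k \<omega>, g k \<omega>)) UNIV"
    and "\<And>k. distr M (measure_pmf (pmf_of_set (UNIV :: 'n set)) \<Otimes>\<^sub>M std_gauss)
                (\<lambda>\<omega>. (i k \<omega>, g k \<omega>))
            = measure_pmf (pmf_of_set (UNIV :: 'n set)) \<Otimes>\<^sub>M std_gauss"
  shows "let d = CARD('n); n = d div 4;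
             m = (\<integral>x. norm x * std_gauss_vec_density x \<partial>(lborel :: (real ^ 'n) measure))
         in prob_space.expectation M
              (\<lambda>\<omega>. ((\<Sum>j<n. norm (walk (mat 1) i g j \<omega>)) / real n - m)\<^sup>2)
            \<ge> real d / 25"
proof -
  interpret prob_space M by fact
  define d where "d = CARD('n)"
  define n where "n = d div 4"
  define m where "m = (\<integral>x. norm x * std_gauss_vec_density x \<partial>(lborel :: (real ^ 'n) measure))"
  define S where "S \<omega> = (\<Sum>l<n. (g l \<omega>)\<^sup>2)" for \<omega>
  define A where "A \<omega> = (\<Sum>j<n. norm (walk (mat 1) i g j \<omega>)) / real n" for \<omega>
  have joint: "(\<lambda>\<omega>. (i k \<omega>, g k \<omega>))
                 \<in> M \<rightarrow>\<^sub>M measure_pmf (pmf_of_set (UNIV :: 'n set)) \<Otimes>\<^sub>M std_gauss" for k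
    using assms(4) unfolding indep_vars_def by auto
  have "i k \<in> measurable M (count_space UNIV)" and "g k \<in> borel_measurable M" for k
    by (rule measurable_fst_pmf_std_gauss_pair[OF joint assms(5)]
        measurable_snd_pmf_std_gauss_pair[OF joint assms(5)])+
  then have A_measurable: "A \<in> borel_measurable M"
    unfolding A_def using measurable_walk by measurable
  have S_integrable: "integrable M S"
    unfolding S_def
    by (intro Bochner_Integration.integrable_sum integrable_sq_snd_pmf_std_gauss_pair[OF joint assms(5)])
  have ES: "expectation S = real n"
    unfolding S_def
    by (simp add: Bochner_Integration.integral_sum integrable_sq_snd_pmf_std_gauss_pair[OF joint assms(5)]
        expectation_sq_snd_pmf_std_gauss_pair[OF joint assms(5)])
  have "real d = 4 * real n" and "0 < n"
    using assms(2,3) by (auto simp: n_def d_def real_of_nat_div)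
  then have sqrt_n: "sqrt (real n) = sqrt (real d) / 2"
    by (simp add: real_sqrt_mult)
  have "real d / 25 \<le> 2 * (sqrt d / 5) * (m - sqrt d / 2) - (sqrt d / 5)\<^sup>2"
    unfolding m_def d_def
    by (rule tangent_bound_ge_d_div_25) (simp_all add: integral_norm_std_gauss_vec_ge)
  also have "sqrt d / 2 = (sqrt n + expectation S / sqrt n) / 2"
    unfolding ES real_div_sqrt[OF of_nat_0_le_iff] by (simp add: sqrt_n)
  also have "2 * (sqrt d / 5) * (m - (sqrt n + expectation S / sqrt n) / 2) - (sqrt d / 5)\<^sup>2
               \<le> expectation (\<lambda>\<omega>. (A \<omega> - m)\<^sup>2)"
    using \<open>0 < n\<close> mean_norm_walk_identity_le[where n = n]
    by (intro expectation_sq_diff_ge_tangent[OF A_measurable S_integrable])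
      (auto simp: A_def S_def sum_nonneg)
  finally show ?thesis
    by (simp add: Let_def A_def d_def n_def m_def)
qed

end
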